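(* Let $A\in\mathbb{R}^{n\times n}$, $T>0$, $\Omega=c+G\mathbf{B}_p\in\mathbb{A}_n$, $\epsilon\in[0,1)$, and $t\in\mathbb{I}\cap[0,T]$ with $t\|A\|\le1$. Then $$\mathfrak{d}\Bigl(\mathcal{I}(t,\Omega,\epsilon),\int_0^t\mathrm{e}^{sA}\Omega\,\mathrm{d}s\Bigr)\le2\bigl((1-\epsilon)t+t^2\|A\|\bigr)\mathrm{e}^{T\|A\|}\|\Omega\|.$$
   Context: A norm $\|\cdot\|$ is fixed on each $\mathbb{R}^k$, $\mathbf{B}_k$ its closed unit ball, matrices with induced norms; $\|M\|=\sup_{x\in M}\|x\|$ for sets. $\mathfrak{d}$ is the Hausdorff distance. $G^\dagger$ is the Moore–Penrose inverse. $\mathbb{A}_n$: sets $c+G\mathbf{B}_p$ with $G\in\mathbb{R}^{n\times p}$, $\mathrm{rank}(G)=n$, regarded with representation $(c,G)$. Set-valued integral $\int_0^tF(s)W\,\mathrm{d}s=\bigcup_w\int_0^tF(s)w(s)\,\mathrm{d}s$ over measurable $w:[0,t]\to W$. $\mathbb{I}=\{t\ge0:\int_0^t\mathrm{e}^{sA}\mathrm{d}s\text{ invertible}\}$. $\mathcal{T}(t,k)=\sum_{j=0}^{k-1}t^{j+1}A^j/(j+1)!$, $\theta(r,k)=\sum_{j=k}^\infty r^j/j!$, $\lambda(t,\Omega,k)=\dfrac{1-\mathrm{e}^{t\|A\|}\theta(t\|A\|,k)\|G^\dagger\|\|c\|}{1+\mathrm{e}^{t\|A\|}\theta(t\|A\|,k)\|G^\dagger\|\|G\|}$,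 $\eta(t,\Omega,\epsilon)=\min\{k\in\mathbb{N}:\lambda(t,\Omega,k)>\epsilon,\ \mathcal{T}(t,k)\text{ invertible}\}$, and $\mathcal{I}(t,\Omega,\epsilon)=\mathcal{T}(t,\eta)[c+\lambda(t,\Omega,\eta)G\mathbf{B}_p]$ with $\eta=\eta(t,\Omega,\epsilon)$. *)

theory Defs
  imports "HOL-Analysis.Analysis"
begin

definition is_norm :: "('a::real_vector \<Rightarrow> real) \<Rightarrow> bool" where
  "is_norm N \<longleftrightarrow> (\<forall>x. N x = 0 \<longleftrightarrow> x = 0) \<and> (\<forall>a x. N (a *\<^sub>R x) = \<bar>a\<bar> * N x)
     \<and> (\<forall>x y. N (x + y) \<le> N x + N y)"

definition unit_ball :: "('a \<Rightarrow> real) \<Rightarrow> 'a set" where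
  "unit_ball N = {x. N x \<le> 1}"

definition ind_norm :: "(real^'q \<Rightarrow> real) \<Rightarrow> (real^'m \<Rightarrow> real) \<Rightarrow> real^'q^'m \<Rightarrow> real" where
  "ind_norm Nd Nc M = Sup {Nc (M *v x) | x. Nd x \<le> 1}"

definition set_norm :: "('a \<Rightarrow> real) \<Rightarrow> 'a set \<Rightarrow> real" where
  "set_norm N X = Sup (N ` X)"

definition hdist :: "('a::real_vector \<Rightarrow> real) \<Rightarrow> 'a set \<Rightarrow> 'a set \<Rightarrow> real" where
  "hdist N X Y = max (SUP x\<in>X. INF y\<in>Y. N (x - y)) (SUP y\<in>Y. INF x\<in>X. N (x - y))"

fun mpow :: "real^'n^'n \<Rightarrow> nat \<Rightarrow> real^'n^'n" where
  "mpow M 0 = mat 1"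
| "mpow M (Suc k) = M ** mpow M k"

definition mexp :: "real^'n^'n \<Rightarrow> real^'n^'n" where
  "mexp M = (\<Sum>k. (1 / fact k) *\<^sub>R mpow M k)"

definition mp_inverse :: "real^'p^'n \<Rightarrow> real^'n^'p" where
  "mp_inverse G = (THE X. G ** X ** G = G \<and> X ** G ** X = X
      \<and> transpose (G ** X) = G ** X \<and> transpose (X ** G) = X ** G)"

definition Iset :: "real^'n^'n \<Rightarrow> real set" where
  "Iset A = {t. t \<ge> 0 \<and> invertible (integral {0..t} (\<lambda>s. mexp (s *\<^sub>R A)))}"

definition Tm :: "real^'n^'n \<Rightarrow> real \<Rightarrow> nat \<Rightarrow> real^'n^'n" where
  "Tm A t k = (\<Sum>j<k. (t ^ (j + 1) / fact (j + 1)) *\<^sub>R mpow A j)"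

definition theta :: "real \<Rightarrow> nat \<Rightarrow> real" where
  "theta r k = (\<Sum>j. r ^ (j + k) / fact (j + k))"

text \<open>lambda(t,Omega,k) for Omega = c + G B_p, with norm NA = ||A||, and given norms.\<close>
definition lam :: "(real^'n \<Rightarrow> real) \<Rightarrow> (real^'p \<Rightarrow> real) \<Rightarrow> real^'n^'n
    \<Rightarrow> real \<Rightarrow> real^'n \<Rightarrow> real^'p^'n \<Rightarrow> nat \<Rightarrow> real" where
  "lam Nn Np A t c G k =
     (let a = ind_norm Nn Nn A; e = exp (t * a) * theta (t * a) k in
      (1 - e * ind_norm Nn Np (mp_inverse G) * Nn c) /
      (1 + e * ind_norm Nn Np (mp_inverse G) * ind_norm Np Nn G))"

definition eta :: "(real^'n \<Rightarrow> real) \<Rightarrow> (real^'p \<Rightarrow> real) \<Rightarrow> real^'n^'n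
    \<Rightarrow> real \<Rightarrow> real^'n \<Rightarrow> real^'p^'n \<Rightarrow> real \<Rightarrow> nat" where
  "eta Nn Np A t c G \<epsilon> = (LEAST k. lam Nn Np A t c G k > \<epsilon> \<and> invertible (Tm A t k))"

definition Iapprox :: "(real^'n \<Rightarrow> real) \<Rightarrow> (real^'p \<Rightarrow> real) \<Rightarrow> real^'n^'n
    \<Rightarrow> real \<Rightarrow> real^'n \<Rightarrow> real^'p^'n \<Rightarrow> real \<Rightarrow> (real^'n) set" where
  "Iapprox Nn Np A t c G \<epsilon> =
     (let k = eta Nn Np A t c G \<epsilon> in
      (\<lambda>x. Tm A t k *v x) ` {c + lam Nn Np A t c G k *\<^sub>R (G *v b) | b. b \<in> unit_ball Np})"

definition set_integral_mv :: "(real \<Rightarrow> real^'p^'n) \<Rightarrow> real \<Rightarrow> (real^'p) set \<Rightarrow> (real^'n) set" where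
  "set_integral_mv F t W =
     {integral {0..t} (\<lambda>s. F s *v w s) | w. w measurable_on {0..t} \<and> (\<forall>s\<in>{0..t}. w s \<in> W)}"

end

theory Submission
  imports Defs
begin

text \<open>Let M be the integral of exp(sA) over [0, t]. A point of the set-valued integral comes
  from a measurable selection w of \<Omega>; replacing w by its mean \<omega>, which lies in the compact
  convex set \<Omega>, changes the integral by the integral of (exp(sA) - I)(\<omega> - w(s)), of norm at
  most t^2 \<parallel>A\<parallel> exp(t\<parallel>A\<parallel>) \<parallel>\<Omega>\<parallel>; conversely M \<omega> itself belongs to the integral.
  The truncation T(t,k) is the integral of the k-th partial sum of exp(sA), so it is within
  t \<theta>(t\<parallel>A\<parallel>,k) \<le> t^2 \<parallel>A\<parallel> exp(t\<parallel>A\<parallel>) of M once k \<ge> 1, and shrinking the generator by a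
  factor \<lambda> > \<epsilon> moves points by at most (1 - \<epsilon>) t exp(t\<parallel>A\<parallel>) \<parallel>\<Omega>\<parallel>. Adding these errors
  bounds both halves of the Hausdorff distance. An order k = \<eta> with \<lambda>(t,\<Omega>,k) > \<epsilon> and T(t,k)
  invertible exists because \<lambda>(t,\<Omega>,k) tends to 1 and T(t,k) tends to the invertible M.\<close>

section \<open>Norms on Euclidean spaces\<close>

locale gen_norm =
  fixes N :: "'a::euclidean_space \<Rightarrow> real"
  assumes is_norm: "is_norm N"
begin

lemma zero_iff: "N x = 0 \<longleftrightarrow> x = 0"
  using is_norm unfolding is_norm_def by blast

lemma scaleR: "N (a *\<^sub>R x) = \<bar>a\<bar> * N x"
  using is_norm unfolding is_norm_def by blast

lemma triangle: "N (x + y) \<le> N x + N y"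
  using is_norm unfolding is_norm_def by blast

lemma zero [simp]: "N 0 = 0"
  using zero_iff by simp

lemma minus: "N (- x) = N x"
  using scaleR[of "-1" x] by simp

lemma nonneg: "0 \<le> N x"
  using triangle[of x "-x"] by (simp add: minus)

lemma triangle_diff: "N (x - y) \<le> N x + N y"
  using triangle[of x "-y"] by (simp add: minus)

lemma minus_commute: "N (x - y) = N (y - x)"
  using minus[of "x - y"] by simp

lemma reverse_triangle: "\<bar>N x - N y\<bar> \<le> N (x - y)"
  using triangle[of "x - y" y] triangle[of "y - x" x] minus_commute[of x y] by simp

lemma sum_le: "N (sum f S) \<le> (\<Sum>i\<in>S. N (f i))"
proof (induction S rule: infinite_finite_induct)
  case (insert x F)
  then show ?case using triangle[of "f x" "sum f F"] by simp
qed auto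

lemma le_mult_norm: "\<exists>C>0. \<forall>x. N x \<le> C * norm x"
proof -
  define C where "C = (\<Sum>b\<in>Basis. N b) + 1"
  have "C > 0" unfolding C_def using nonneg
    by (metis add_nonneg_pos sum_nonneg zero_less_one)
  moreover have "N x \<le> C * norm x" for x
  proof -
    have "N x = N (\<Sum>b\<in>Basis. (x \<bullet> b) *\<^sub>R b)" by (simp add: euclidean_representation)
    also have "\<dots> \<le> (\<Sum>b\<in>Basis. N ((x \<bullet> b) *\<^sub>R b))" by (rule sum_le)
    also have "\<dots> = (\<Sum>b\<in>Basis. \<bar>x \<bullet> b\<bar> * N b)" by (simp add: scaleR)
    also have "\<dots> \<le> (\<Sum>b\<in>Basis. norm x * N b)"
      by (intro sum_mono mult_right_mono) (auto simp: Basis_le_norm nonneg)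
    also have "\<dots> \<le> C * norm x" unfolding C_def by (simp add: sum_distrib_left algebra_simps)
    finally show ?thesis .
  qed
  ultimately show ?thesis by blast
qed

lemma continuous_on: "continuous_on S N"
proof -
  obtain C where C: "C > 0" "\<And>x. N x \<le> C * norm x" using le_mult_norm by blast
  have "dist (N x) (N y) \<le> C * dist x y" for x y
    using reverse_triangle[of x y] C(2)[of "x - y"] by (simp add: dist_norm dist_real_def)
  then have "lipschitz_on C UNIV N" using C(1) by (intro lipschitz_onI) auto
  then show ?thesis by (rule continuous_on_subset[OF lipschitz_on_continuous_on]) simp
qed

lemma ge_mult_norm: "\<exists>c>0. \<forall>x. c * norm x \<le> N x"
proof -
  have "(SOME i. i \<in> Basis) \<in> sphere (0::'a) 1"
    using norm_Basis[OF SOME_Basis] by simp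
  then have "sphere (0::'a) 1 \<noteq> {}" by blast
  then obtain x0 where x0: "x0 \<in> sphere 0 1" "\<And>y. y \<in> sphere 0 1 \<Longrightarrow> N x0 \<le> N y"
    using continuous_attains_inf[OF compact_sphere _ continuous_on] by blast
  have "N x0 > 0" using x0(1) nonneg[of x0] zero_iff[of x0] by fastforce
  moreover have "N x0 * norm x \<le> N x" for x
  proof (cases "x = 0")
    case False
    then have "N x0 \<le> N ((1 / norm x) *\<^sub>R x)" by (intro x0(2)) (simp add: sphere_def)
    with False show ?thesis by (simp add: scaleR field_simps)
  qed simp
  ultimately show ?thesis by blast
qed

lemma compact_sublevel: "compact {x. N x \<le> r}"
proof -
  obtain c where c: "c > 0" "\<And>x. c * norm x \<le> N x" using ge_mult_norm by blast
  have "bounded {x. N x \<le> r}" unfolding bounded_iff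
    by (rule exI[of _ "r / c"]) (use c in \<open>auto simp: field_simps intro: order_trans\<close>)
  moreover have "closed {x. N x \<le> r}"
    by (rule closed_Collect_le) (auto simp: continuous_on)
  ultimately show ?thesis by (simp add: compact_eq_bounded_closed)
qed

lemma convex_sublevel: "convex {x. N x \<le> r}"
proof (rule convexI, clarify)
  fix x y :: 'a and u v :: real
  assume "N x \<le> r" "N y \<le> r" "0 \<le> u" "0 \<le> v" "u + v = 1"
  then have "N (u *\<^sub>R x + v *\<^sub>R y) \<le> u * r + v * r"
    using triangle[of "u *\<^sub>R x" "v *\<^sub>R y"]
    by (simp add: scaleR) (smt (verit, best) mult_left_mono)
  also have "\<dots> = r" using \<open>u + v = 1\<close> by (metis distrib_right mult_1)
  finally show "N (u *\<^sub>R x + v *\<^sub>R y) \<le> r" .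
qed

lemma summable_bound:
  assumes "\<And>j. N (f j) \<le> h j" "summable h"
  shows "summable f" "N (suminf f) \<le> suminf h"
proof -
  obtain c where c: "c > 0" "\<And>x. c * norm x \<le> N x" using ge_mult_norm by blast
  have "norm (f j) \<le> h j / c" for j
    using assms(1)[of j] c(2)[of "f j"] c(1) by (simp add: field_simps)
  with summable_divide[OF assms(2)] show sf: "summable f"
    by (intro summable_comparison_test[of f "\<lambda>j. h j / c"]) auto
  have "isCont N (suminf f)"
    using continuous_on[of UNIV] by (simp add: continuous_on_eq_continuous_at)
  then have "(\<lambda>m. N (\<Sum>j<m. f j)) \<longlonglongrightarrow> N (suminf f)"
    using isCont_tendsto_compose summable_LIMSEQ[OF sf] by blast
  moreover have "N (\<Sum>j<m. f j) \<le> (\<Sum>j<m. h j)" for m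
    using sum_le[of f] sum_mono[of _ "\<lambda>j. N (f j)" h] assms(1) order_trans by blast
  ultimately show "N (suminf f) \<le> suminf h"
    by (intro LIMSEQ_le[OF _ summable_LIMSEQ[OF assms(2)]]) auto
qed

end

lemma integral_mean_in_closed_convex:
  fixes f :: "real \<Rightarrow> 'b::euclidean_space"
  assumes "f integrable_on {0..t}" "t > 0" "closed K" "convex K"
    and "\<And>s. s \<in> {0..t} \<Longrightarrow> f s \<in> K"
  shows "(1/t) *\<^sub>R integral {0..t} f \<in> K"
proof (rule ccontr)
  assume "(1/t) *\<^sub>R integral {0..t} f \<notin> K"
  then obtain a b where ab: "a \<bullet> ((1/t) *\<^sub>R integral {0..t} f) < b" "\<forall>x\<in>K. a \<bullet> x > b"
    using separating_hyperplane_closed_point[OF assms(4,3)] by blast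
  have "integral {0..t} (\<lambda>s. a \<bullet> f s) = a \<bullet> integral {0..t} f"
    using integral_linear[OF assms(1) bounded_linear_inner_right[of a]] by (simp add: o_def)
  moreover have "(\<lambda>s. a \<bullet> f s) integrable_on {0..t}"
    using integrable_linear[OF assms(1) bounded_linear_inner_right[of a]] by (simp add: o_def)
  then have "integral {0..t} (\<lambda>s. b) \<le> integral {0..t} (\<lambda>s. a \<bullet> f s)"
    using ab(2) assms(5) by (intro integral_le) (auto intro: less_imp_le)
  ultimately have "t * b \<le> a \<bullet> integral {0..t} f" using assms(2) by simp
  with ab(1) assms(2) show False by (simp add: field_simps)
qed

context gen_norm
begin

text \<open>The epigraph of \<open>N\<close> is closed and convex, so it contains the mean of \<open>(f, g)\<close>.\<close>
lemma integral_le: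
  fixes f :: "real \<Rightarrow> 'a"
  assumes f: "f integrable_on {0..t}" and g: "g integrable_on {0..t}" and "t > 0"
    and "\<And>s. s \<in> {0..t} \<Longrightarrow> N (f s) \<le> g s"
  shows "N (integral {0..t} f) \<le> integral {0..t} g"
proof -
  have h1: "((\<lambda>s. (f s, 0::real)) has_integral (integral {0..t} f, 0)) {0..t}"
    using has_integral_linear[OF integrable_integral[OF f]
        bounded_linear_Pair[OF bounded_linear_ident bounded_linear_zero]] by (simp add: o_def)
  have h2: "((\<lambda>s. (0::'a, g s)) has_integral (0, integral {0..t} g)) {0..t}"
    using has_integral_linear[OF integrable_integral[OF g]
        bounded_linear_Pair[OF bounded_linear_zero bounded_linear_ident]] by (simp add: o_def)
  have fg: "((\<lambda>s. (f s, g s)) has_integral (integral {0..t} f, integral {0..t} g)) {0..t}"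
    using has_integral_add[OF h1 h2] by simp
  define K where "K = {p::'a \<times> real. N (fst p) \<le> snd p}"
  have "closed K" unfolding K_def
    by (intro closed_Collect_le continuous_on_compose2[OF continuous_on continuous_on_fst]
        continuous_on_snd) auto
  moreover have "convex K"
  proof (rule convexI)
    fix p q :: "'a \<times> real" and u v :: real
    assume "p \<in> K" "q \<in> K" "0 \<le> u" "0 \<le> v" "u + v = 1"
    then have "N (u *\<^sub>R fst p + v *\<^sub>R fst q) \<le> u * snd p + v * snd q"
      using triangle[of "u *\<^sub>R fst p" "v *\<^sub>R fst q"] unfolding K_def
      by (simp add: scaleR) (smt (verit, best) mult_left_mono)
    then show "u *\<^sub>R p + v *\<^sub>R q \<in> K" by (simp add: K_def)
  qed
  ultimately have "(1/t) *\<^sub>R integral {0..t} (\<lambda>s. (f s, g s)) \<in> K"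
    using assms(4) \<open>t > 0\<close>
    by (intro integral_mean_in_closed_convex[OF has_integral_integrable[OF fg]]) (auto simp: K_def)
  then have "(1/t) * N (integral {0..t} f) \<le> (1/t) * integral {0..t} g"
    using integral_unique[OF fg] \<open>t > 0\<close> by (simp add: K_def scaleR)
  with \<open>t > 0\<close> show ?thesis by (simp add: divide_le_cancel)
qed

end

lemma
  fixes Nd :: "real^'q \<Rightarrow> real" and Nc :: "real^'m \<Rightarrow> real" and M :: "real^'q^'m"
  assumes "is_norm Nd" "is_norm Nc"
  shows ind_norm_le: "Nc (M *v x) \<le> ind_norm Nd Nc M * Nd x"
    and ind_norm_nonneg: "0 \<le> ind_norm Nd Nc M"
proof -
  interpret d: gen_norm Nd by (rule gen_norm.intro) fact
  interpret c: gen_norm Nc by (rule gen_norm.intro) fact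
  define S where "S = {Nc (M *v x) | x. Nd x \<le> 1}"
  have "continuous_on UNIV (\<lambda>x. Nc (M *v x))"
    using continuous_on_compose[OF linear_continuous_on[OF matrix_vector_mul_bounded_linear]
        c.continuous_on] by (simp add: o_def)
  then have "compact ((\<lambda>x. Nc (M *v x)) ` {x. Nd x \<le> 1})"
    by (intro compact_continuous_image d.compact_sublevel) (rule continuous_on_subset, auto)
  moreover have "S = (\<lambda>x. Nc (M *v x)) ` {x. Nd x \<le> 1}" unfolding S_def by blast
  ultimately have bdd: "bdd_above S" by (simp add: bounded_imp_bdd_above compact_imp_bounded)
  have "0 \<in> S" unfolding S_def by (rule CollectI, rule exI[of _ 0]) simp
  then show nonneg: "0 \<le> ind_norm Nd Nc M"
    unfolding ind_norm_def S_def[symmetric] using cSup_upper[OF _ bdd] by blast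
  show "Nc (M *v x) \<le> ind_norm Nd Nc M * Nd x"
  proof (cases "x = 0")
    case False
    then have pos: "Nd x > 0" using d.nonneg[of x] d.zero_iff[of x] by linarith
    then have "Nc (M *v ((1 / Nd x) *\<^sub>R x)) \<in> S" unfolding S_def by (auto simp: d.scaleR)
    then have "Nc (M *v ((1 / Nd x) *\<^sub>R x)) \<le> ind_norm Nd Nc M"
      unfolding ind_norm_def S_def[symmetric] using cSup_upper[OF _ bdd] by blast
    with pos show ?thesis by (simp add: matrix_vector_mult_scaleR c.scaleR field_simps)
  qed simp
qed

lemma norm_matrix_le_gen_norm_bound:
  fixes N :: "real^'n \<Rightarrow> real"
  assumes "is_norm N"
  obtains K where "K \<ge> 0"
    "\<And>(M::real^'n^'n) \<beta>. (\<And>v. N (M *v v) \<le> \<beta> * N v) \<Longrightarrow> norm M \<le> K * \<beta>"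
proof -
  interpret gen_norm N by (rule gen_norm.intro) fact
  obtain c where c: "c > 0" "\<And>x. c * norm x \<le> N x" using ge_mult_norm by blast
  define K where "K = real CARD('n) * (\<Sum>l\<in>UNIV. N (axis l 1)) / c"
  have "norm M \<le> K * \<beta>" if hM: "\<And>v. N (M *v v) \<le> \<beta> * N v" for M :: "real^'n^'n" and \<beta>
  proof -
    have entry: "\<bar>M $ i $ l\<bar> \<le> \<beta> * N (axis l 1) / c" for i l
    proof -
      have "\<bar>M $ i $ l\<bar> \<le> norm (M *v axis l 1)"
        by (metis component_le_norm_cart matrix_vector_mult_basis column_def vec_lambda_beta)
      also have "\<dots> \<le> N (M *v axis l 1) / c" using c by (simp add: field_simps)
      also have "\<dots> \<le> \<beta> * N (axis l 1) / c" using hM c(1) by (simp add: divide_right_mono)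
      finally show ?thesis .
    qed
    have "norm M \<le> (\<Sum>i\<in>UNIV. norm (M $ i))"
      unfolding norm_vec_def by (rule L2_set_le_sum) simp
    also have "\<dots> \<le> (\<Sum>i\<in>UNIV. \<Sum>l\<in>UNIV. \<bar>M $ i $ l\<bar>)"
      by (intro sum_mono norm_le_l1_cart)
    also have "\<dots> \<le> (\<Sum>i\<in>(UNIV::'n set). \<Sum>l\<in>UNIV. \<beta> * N (axis l 1) / c)"
      by (intro sum_mono entry)
    also have "\<dots> = K * \<beta>" unfolding K_def
      by (simp add: sum_distrib_left[symmetric] sum_divide_distrib[symmetric])
    finally show ?thesis .
  qed
  moreover have "K \<ge> 0" unfolding K_def using c(1) nonneg by (simp add: sum_nonneg)
  ultimately show ?thesis using that by blast
qed

section \<open>The matrix exponential and its truncations\<close>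

lemma exp_sums: "(\<lambda>n. r ^ n / fact n) sums exp (r::real)"
  using exp_converges[of r] by (simp add: divide_inverse mult.commute)

lemma theta_summable: "summable (\<lambda>j. r ^ (j + k) / fact (j + k) :: real)"
  using summable_ignore_initial_segment[OF sums_summable[OF exp_sums[of r]], of k] by simp

lemma theta_eq: "theta r k = exp r - (\<Sum>j<k. r ^ j / fact j)"
  using suminf_split_initial_segment[OF sums_summable[OF exp_sums[of r]], of k] exp_sums[of r]
  unfolding theta_def by (simp add: sums_iff)

lemma theta_nonneg: "0 \<le> r \<Longrightarrow> 0 \<le> theta r k"
  unfolding theta_def by (intro suminf_nonneg theta_summable) auto

lemma theta_le_exp_minus_one:
  assumes "0 \<le> r" "1 \<le> k"
  shows "theta r k \<le> exp r - 1"
proof -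
  have "(\<Sum>j<1. r ^ j / fact j) \<le> (\<Sum>j<k. r ^ j / fact j)"
    using assms by (intro sum_mono2) auto
  then show ?thesis unfolding theta_eq by simp
qed

lemma theta_mono:
  assumes "0 \<le> r" "r \<le> r'"
  shows "theta r k \<le> theta r' k"
  unfolding theta_def
  by (intro suminf_le theta_summable allI divide_right_mono power_mono) (use assms in auto)

lemma theta_tendsto_zero: "(\<lambda>k. theta r k) \<longlonglongrightarrow> 0"
proof -
  have "(\<lambda>k. exp r - (\<Sum>j<k. r ^ j / fact j)) \<longlonglongrightarrow> exp r - exp r"
    using exp_sums[of r] unfolding sums_def by (intro tendsto_intros)
  then show ?thesis unfolding theta_eq by simp
qed

lemma exp_minus_one_le:
  assumes "0 \<le> (r::real)"
  shows "exp r - 1 \<le> r * exp r"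
proof -
  have "(1 - r) * exp r \<le> exp (- r) * exp r"
    using exp_ge_add_one_self[of "-r"] by (intro mult_right_mono) auto
  then show ?thesis by (simp add: exp_minus field_simps)
qed

lemma mpow_scaleR: "mpow (s *\<^sub>R A) j = s ^ j *\<^sub>R mpow A j"
  by (induction j) (auto simp: matrix_scalar_ac scalar_matrix_assoc mult.commute)

lemma bounded_linear_matrix_vector_left: "bounded_linear (\<lambda>M::real^'n^'m. M *v v)"
  unfolding linear_conv_bounded_linear[symmetric]
  by (rule linearI) (auto simp: matrix_vector_mult_add_rdistrib scaleR_matrix_vector_assoc)

lemma bilinear_matrix_vector_mult: "bilinear (\<lambda>(M::real^'n^'m) v. M *v v)"
  unfolding bilinear_def
  using bounded_linear.linear[OF bounded_linear_matrix_vector_left]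
    bounded_linear.linear[OF matrix_vector_mul_bounded_linear] by auto

lemma sum_matrix_vector: "(\<Sum>j<k. M j) *v v = (\<Sum>j<k. M j *v v)"
  for M :: "nat \<Rightarrow> real^'n^'m"
  by (induction k) (auto simp: matrix_vector_mult_add_rdistrib)

locale gen_norm_matrix = gen_norm N for N :: "real^'n \<Rightarrow> real" +
  fixes A :: "real^'n^'n"
begin

abbreviation "normA \<equiv> ind_norm N N A"

lemma normA_nonneg: "0 \<le> normA"
  using ind_norm_nonneg[OF is_norm is_norm] .

lemma mpow_le: "N (mpow A j *v v) \<le> normA ^ j * N v"
proof (induction j)
  case (Suc j)
  have "N (mpow A (Suc j) *v v) \<le> normA * N (mpow A j *v v)"
    using ind_norm_le[OF is_norm is_norm, of A "mpow A j *v v"]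
    by (simp add: matrix_vector_mul_assoc)
  also have "\<dots> \<le> normA * (normA ^ j * N v)" using Suc normA_nonneg by (intro mult_left_mono)
  finally show ?case by (simp add: algebra_simps)
qed simp

lemma exp_term_le:
  "N (((s ^ j / fact j) *\<^sub>R mpow A j) *v v) \<le> (\<bar>s\<bar> * normA) ^ j / fact j * N v"
proof -
  have "N (((s ^ j / fact j) *\<^sub>R mpow A j) *v v) = \<bar>s\<bar> ^ j / fact j * N (mpow A j *v v)"
    by (simp add: scaleR_matrix_vector_assoc[symmetric] scaleR power_abs)
  also have "\<dots> \<le> \<bar>s\<bar> ^ j / fact j * (normA ^ j * N v)"
    by (intro mult_left_mono mpow_le) auto
  finally show ?thesis by (simp add: power_mult_distrib)
qed

lemma exp_term_norm_le:
  obtains K where "K \<ge> 0"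
    "\<And>s j. norm ((s ^ j / fact j) *\<^sub>R mpow A j) \<le> K * ((\<bar>s\<bar> * normA) ^ j / fact j)"
proof -
  obtain K where K: "K \<ge> 0"
    "\<And>(M::real^'n^'n) \<beta>. (\<And>v. N (M *v v) \<le> \<beta> * N v) \<Longrightarrow> norm M \<le> K * \<beta>"
    using norm_matrix_le_gen_norm_bound[OF is_norm] by blast
  show ?thesis by (rule that[OF K(1)], rule K(2), rule exp_term_le)
qed

lemma mexp_summable: "summable (\<lambda>j. (s ^ j / fact j) *\<^sub>R mpow A j)"
proof -
  obtain K where K: "K \<ge> 0"
    "\<And>s j. norm ((s ^ j / fact j) *\<^sub>R mpow A j) \<le> K * ((\<bar>s\<bar> * normA) ^ j / fact j)"
    using exp_term_norm_le by blast
  show ?thesis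
    by (rule summable_comparison_test'[OF summable_mult[OF sums_summable[OF exp_sums]]])
      (rule K(2))
qed

lemma mexp_scaleR: "mexp (s *\<^sub>R A) = (\<Sum>j. (s ^ j / fact j) *\<^sub>R mpow A j)"
  unfolding mexp_def by (simp add: mpow_scaleR)

lemma
  shows mexp_mult_vector:
    "mexp (s *\<^sub>R A) *v v = (\<Sum>j. (s ^ j / fact j) *\<^sub>R (mpow A j *v v))"
    and mexp_mult_vector_summable:
    "summable (\<lambda>j. (s ^ j / fact j) *\<^sub>R (mpow A j *v v))"
  using bounded_linear.suminf[OF bounded_linear_matrix_vector_left mexp_summable]
    bounded_linear.summable[OF bounded_linear_matrix_vector_left[of v] mexp_summable[of s]]
  unfolding mexp_scaleR by (simp_all add: scaleR_matrix_vector_assoc)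

lemma mexp_tail_le:
  "N (mexp (s *\<^sub>R A) *v v - (\<Sum>j<k. (s ^ j / fact j) *\<^sub>R (mpow A j *v v)))
     \<le> theta (\<bar>s\<bar> * normA) k * N v"
proof -
  define f where "f j = (s ^ j / fact j) *\<^sub>R (mpow A j *v v)" for j
  have "mexp (s *\<^sub>R A) *v v - (\<Sum>j<k. f j) = (\<Sum>j. f (j + k))"
    using suminf_split_initial_segment[OF mexp_mult_vector_summable, of s v k]
    unfolding mexp_mult_vector f_def by simp
  also have "N \<dots> \<le> (\<Sum>j. (\<bar>s\<bar> * normA) ^ (j + k) / fact (j + k) * N v)"
    using exp_term_le summable_mult2[OF theta_summable]
    unfolding f_def by (intro summable_bound(2)) (simp_all add: scaleR_matrix_vector_assoc)
  also have "\<dots> = theta (\<bar>s\<bar> * normA) k * N v"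
    unfolding theta_def by (rule suminf_mult2[symmetric, OF theta_summable])
  finally show ?thesis unfolding f_def .
qed

lemma
  assumes "0 \<le> s"
  shows mexp_minus_id_le: "N (mexp (s *\<^sub>R A) *v v - v) \<le> (exp (s * normA) - 1) * N v"
    and mexp_le: "N (mexp (s *\<^sub>R A) *v v) \<le> exp (s * normA) * N v"
proof -
  show *: "N (mexp (s *\<^sub>R A) *v v - v) \<le> (exp (s * normA) - 1) * N v"
    using mexp_tail_le[of s v 1] assms by (simp add: theta_eq)
  show "N (mexp (s *\<^sub>R A) *v v) \<le> exp (s * normA) * N v"
    using triangle[of "mexp (s *\<^sub>R A) *v v - v" v] * by (simp add: algebra_simps)
qed

lemma mexp_minus_id_le_linear:
  assumes "0 \<le> s" "s \<le> t"
  shows "N (mexp (s *\<^sub>R A) *v v - v) \<le> s * normA * exp (t * normA) * N v"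
proof -
  have sA: "0 \<le> s * normA" "s * normA \<le> t * normA"
    using assms normA_nonneg by (auto intro: mult_right_mono)
  have "exp (s * normA) - 1 \<le> s * normA * exp (s * normA)"
    by (rule exp_minus_one_le[OF sA(1)])
  also have "\<dots> \<le> s * normA * exp (t * normA)"
    using sA by (intro mult_left_mono) auto
  finally show ?thesis
    by (rule order_trans[OF mexp_minus_id_le[OF assms(1)] mult_right_mono[OF _ nonneg]])
qed

lemma continuous_on_mexp: "continuous_on {0..t} (\<lambda>s. mexp (s *\<^sub>R A))"
proof -
  obtain K where K: "K \<ge> 0"
    "\<And>s j. norm ((s ^ j / fact j) *\<^sub>R mpow A j) \<le> K * ((\<bar>s\<bar> * normA) ^ j / fact j)"
    using exp_term_norm_le by blast
  have ul: "uniform_limit {0..t} (\<lambda>n s. \<Sum>j<n. (s ^ j / fact j) *\<^sub>R mpow A j)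
      (\<lambda>s. \<Sum>j. (s ^ j / fact j) *\<^sub>R mpow A j) sequentially"
  proof (rule Weierstrass_m_test)
    fix n and s :: real
    assume "s \<in> {0..t}"
    then have st: "(\<bar>s\<bar> * normA) ^ n / fact n \<le> (\<bar>t\<bar> * normA) ^ n / fact n"
      using normA_nonneg by (intro divide_right_mono power_mono mult_right_mono) auto
    show "norm ((s ^ n / fact n) *\<^sub>R mpow A n) \<le> K * ((\<bar>t\<bar> * normA) ^ n / fact n)"
      by (rule order_trans[OF K(2) mult_left_mono[OF st K(1)]])
  qed (rule summable_mult[OF sums_summable[OF exp_sums]])
  show ?thesis unfolding mexp_scaleR
    by (rule uniform_limit_theorem[OF always_eventually ul]) (auto intro!: continuous_intros)
qed

lemma Tm_mult_vector:
  "Tm A t k *v v = (\<Sum>j<k. (t ^ (j + 1) / fact (j + 1)) *\<^sub>R (mpow A j *v v))"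
  unfolding Tm_def sum_matrix_vector by (simp add: scaleR_matrix_vector_assoc)

lemma Tm_le:
  assumes "0 \<le> t"
  shows "N (Tm A t k *v v) \<le> t * exp (t * normA) * N v"
proof -
  have "N (Tm A t k *v v) \<le> (\<Sum>j<k. N ((t ^ (j + 1) / fact (j + 1)) *\<^sub>R (mpow A j *v v)))"
    unfolding Tm_mult_vector by (rule sum_le)
  also have "\<dots> = (\<Sum>j<k. t ^ (j + 1) / fact (j + 1) * N (mpow A j *v v))"
    using assms by (simp add: scaleR)
  also have "\<dots> \<le> (\<Sum>j<k. t * ((t * normA) ^ j / fact j) * N v)"
  proof (rule sum_mono)
    fix j
    have "t ^ (j + 1) / fact (j + 1) \<le> t ^ (j + 1) / fact j"
      using assms by (intro divide_left_mono) (auto simp: fact_mono)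
    then have "t ^ (j + 1) / fact (j + 1) * N (mpow A j *v v) \<le> t ^ (j + 1) / fact j * (normA ^ j * N v)"
      using assms mpow_le nonneg by (intro mult_mono) auto
    then show "t ^ (j + 1) / fact (j + 1) * N (mpow A j *v v) \<le> t * ((t * normA) ^ j / fact j) * N v"
      by (simp add: power_mult_distrib)
  qed
  also have "\<dots> = t * (\<Sum>j<k. (t * normA) ^ j / fact j) * N v"
    by (simp add: sum_distrib_left sum_distrib_right mult.assoc)
  also have "\<dots> \<le> t * exp (t * normA) * N v"
  proof -
    have "(\<Sum>j<k. (t * normA) ^ j / fact j) \<le> (\<Sum>j. (t * normA) ^ j / fact j)"
      using assms normA_nonneg by (intro sum_le_suminf sums_summable[OF exp_sums]) auto
    also have "\<dots> = exp (t * normA)" using exp_sums by (simp add: sums_iff)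
    finally show ?thesis using assms nonneg by (intro mult_right_mono mult_left_mono) auto
  qed
  finally show ?thesis .
qed

lemma Tm_has_integral:
  assumes "0 \<le> t"
  shows "((\<lambda>s. \<Sum>j<k. (s ^ j / fact j) *\<^sub>R mpow A j) has_integral Tm A t k) {0..t}"
proof -
  have "((\<lambda>s. (s ^ (j + 1) / fact (j + 1)) *\<^sub>R mpow A j) has_vector_derivative
      (s ^ j / fact j) *\<^sub>R mpow A j) (at s within {0..t})" for s j
  proof -
    have "((\<lambda>s. s ^ (j + 1) / fact (j + 1)) has_real_derivative s ^ j / fact j) (at s within {0..t})"
      using DERIV_cdivide[OF DERIV_pow[of "j + 1" s], of "fact (j + 1)"]
      by (simp add: fact_Suc del: of_nat_Suc)
    then show ?thesis
      using has_vector_derivative_scaleR[OF _ has_vector_derivative_const[of "mpow A j"]] by force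
  qed
  then have "((\<lambda>s. \<Sum>j<k. (s ^ j / fact j) *\<^sub>R mpow A j) has_integral
      (\<Sum>j<k. (t ^ (j + 1) / fact (j + 1)) *\<^sub>R mpow A j) - (\<Sum>j<k. (0 ^ (j + 1) / fact (j + 1)) *\<^sub>R mpow A j)) {0..t}"
    by (intro fundamental_theorem_of_calculus[OF assms] has_vector_derivative_sum) auto
  then show ?thesis unfolding Tm_def by simp
qed

lemma integrable_mexp_mult_vector: "(\<lambda>s. mexp (s *\<^sub>R A) *v v) integrable_on {0..t}"
  using integrable_linear[OF integrable_continuous_real[OF continuous_on_mexp]
      bounded_linear_matrix_vector_left] by (simp add: o_def)

lemma integral_mexp_mult_vector:
  "integral {0..t} (\<lambda>s. mexp (s *\<^sub>R A)) *v v = integral {0..t} (\<lambda>s. mexp (s *\<^sub>R A) *v v)"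
  using integral_linear[OF integrable_continuous_real[OF continuous_on_mexp]
      bounded_linear_matrix_vector_left] by (simp add: o_def)

lemma integral_mexp_minus_Tm_le:
  assumes "0 < t"
  shows "N (integral {0..t} (\<lambda>s. mexp (s *\<^sub>R A)) *v v - Tm A t k *v v)
    \<le> t * theta (t * normA) k * N v"
proof -
  let ?S = "\<lambda>s. (\<Sum>j<k. (s ^ j / fact j) *\<^sub>R mpow A j) *v v"
  have S: "(?S has_integral Tm A t k *v v) {0..t}"
    using has_integral_linear[OF Tm_has_integral bounded_linear_matrix_vector_left] assms
    by (simp add: o_def)
  have "integral {0..t} (\<lambda>s. mexp (s *\<^sub>R A)) *v v - Tm A t k *v v
      = integral {0..t} (\<lambda>s. mexp (s *\<^sub>R A) *v v - ?S s)"
    unfolding integral_mexp_mult_vector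
    using integral_diff[OF integrable_mexp_mult_vector has_integral_integrable[OF S]]
      integral_unique[OF S] by simp
  also have "N \<dots> \<le> integral {0..t} (\<lambda>s. theta (t * normA) k * N v)"
  proof (rule integral_le[OF integrable_diff[OF integrable_mexp_mult_vector
          has_integral_integrable[OF S]] integrable_const_ivl assms])
    fix s
    assume "s \<in> {0..t}"
    then have "theta (\<bar>s\<bar> * normA) k * N v \<le> theta (t * normA) k * N v"
      using normA_nonneg by (intro mult_right_mono theta_mono nonneg mult_right_mono) auto
    then show "N (mexp (s *\<^sub>R A) *v v - ?S s) \<le> theta (t * normA) k * N v"
      using mexp_tail_le[of s v k] unfolding sum_matrix_vector
      by (simp add: scaleR_matrix_vector_assoc)
  qed
  also have "\<dots> = t * theta (t * normA) k * N v" using assms by simp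
  finally show ?thesis .
qed

lemma integrable_mexp_mult_bounded:
  assumes w: "w measurable_on {0..t}" and R: "\<And>s. s \<in> {0..t} \<Longrightarrow> N (w s) \<le> R"
  shows "(\<lambda>s. mexp (s *\<^sub>R A) *v w s) integrable_on {0..t}" "w integrable_on {0..t}"
proof -
  obtain c where c: "c > 0" "\<And>x. c * norm x \<le> N x" using ge_mult_norm by blast
  have norm_le: "norm x \<le> N x / c" for x using c by (simp add: field_simps)
  have "{0..t} \<in> sets lebesgue" by simp
  then have wm: "w \<in> borel_measurable (lebesgue_on {0..t})"
    using w measurable_on_iff_borel_measurable by blast
  have "(\<lambda>s. mexp (s *\<^sub>R A)) \<in> borel_measurable (lebesgue_on {0..t})"
    by (rule continuous_imp_measurable_on_sets_lebesgue[OF continuous_on_mexp]) simp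
  then have "(\<lambda>s. mexp (s *\<^sub>R A) *v w s) \<in> borel_measurable (lebesgue_on {0..t})"
    using borel_measurable_bilinear[OF bilinear_matrix_vector_mult _ wm] by simp
  then show "(\<lambda>s. mexp (s *\<^sub>R A) *v w s) integrable_on {0..t}"
  proof (rule measurable_bounded_by_integrable_imp_integrable[OF _ integrable_const_ivl])
    fix s
    assume s: "s \<in> {0..t}"
    have "N (mexp (s *\<^sub>R A) *v w s) \<le> exp (s * normA) * N (w s)"
      using mexp_le s by auto
    also have "\<dots> \<le> exp (t * normA) * R"
      using s R[OF s] normA_nonneg nonneg[of "w s"]
      by (intro mult_mono) (auto intro: mult_right_mono)
    finally show "norm (mexp (s *\<^sub>R A) *v w s) \<le> exp (t * normA) * R / c"
      using norm_le[of "mexp (s *\<^sub>R A) *v w s"] c(1) by (smt (verit) divide_right_mono)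
  qed simp
  show "w integrable_on {0..t}"
    using wm
  proof (rule measurable_bounded_by_integrable_imp_integrable[OF _ integrable_const_ivl])
    fix s
    assume "s \<in> {0..t}"
    then show "norm (w s) \<le> R / c"
      using norm_le[of "w s"] R c(1) by (smt (verit) divide_right_mono)
  qed simp
qed

end

section \<open>Approximation of the set-valued integral\<close>

lemma hdist_le:
  assumes "X \<noteq> {}" "Y \<noteq> {}" "\<And>z. 0 \<le> N z"
    and "\<And>x. x \<in> X \<Longrightarrow> \<exists>y\<in>Y. N (x - y) \<le> D"
    and "\<And>y. y \<in> Y \<Longrightarrow> \<exists>x\<in>X. N (x - y) \<le> D"
  shows "hdist N X Y \<le> D"
proof -
  have "(SUP x\<in>X. INF y\<in>Y. N (x - y)) \<le> D"
  proof (rule cSUP_least[OF assms(1)])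
    fix x
    assume "x \<in> X"
    then obtain y where "y \<in> Y" "N (x - y) \<le> D" using assms(4) by blast
    then show "(INF y\<in>Y. N (x - y)) \<le> D"
      using assms(3) by (intro cINF_lower2 bdd_belowI2) auto
  qed
  moreover have "(SUP y\<in>Y. INF x\<in>X. N (x - y)) \<le> D"
  proof (rule cSUP_least[OF assms(2)])
    fix y
    assume "y \<in> Y"
    then obtain x where "x \<in> X" "N (x - y) \<le> D" using assms(5) by blast
    then show "(INF x\<in>X. N (x - y)) \<le> D"
      using assms(3) by (intro cINF_lower2 bdd_belowI2) auto
  qed
  ultimately show ?thesis unfolding hdist_def by simp
qed

lemma set_norm_upper:
  fixes N :: "'a::euclidean_space \<Rightarrow> real"
  assumes "is_norm N" "compact X" "x \<in> X"
  shows "N x \<le> set_norm N X"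
proof -
  interpret gen_norm N by (rule gen_norm.intro) fact
  have "compact (N ` X)" by (rule compact_continuous_image[OF continuous_on assms(2)])
  then show ?thesis unfolding set_norm_def
    using assms(3) by (intro cSup_upper bounded_imp_bdd_above compact_imp_bounded) auto
qed

lemma set_norm_nonneg:
  fixes N :: "'a::euclidean_space \<Rightarrow> real"
  assumes "is_norm N" "compact X" "x \<in> X"
  shows "0 \<le> set_norm N X"
  using set_norm_upper[OF assms] gen_norm.nonneg[OF gen_norm.intro[OF assms(1)], of x] by linarith

context
  fixes Np :: "real^'p \<Rightarrow> real" and c :: "real^'n" and G :: "real^'p^'n"
  assumes Np: "is_norm Np"
begin

interpretation Np: gen_norm Np by (rule gen_norm.intro) (rule Np)

lemma affine_unit_ball_eq: "{c + G *v b | b. b \<in> unit_ball Np} = (+) c ` (*v) G ` {b. Np b \<le> 1}"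
  unfolding unit_ball_def by auto

lemma compact_affine_unit_ball: "compact {c + G *v b | b. b \<in> unit_ball Np}"
  unfolding affine_unit_ball_eq
  by (intro compact_translation compact_continuous_image Np.compact_sublevel
      linear_continuous_on matrix_vector_mul_bounded_linear)

lemma convex_affine_unit_ball: "convex {c + G *v b | b. b \<in> unit_ball Np}"
  unfolding affine_unit_ball_eq
  by (intro convex_translation convex_linear_image Np.convex_sublevel matrix_vector_mul_linear)

lemma center_in_affine_unit_ball: "c \<in> {c + G *v b | b. b \<in> unit_ball Np}"
  by (rule CollectI, rule exI[of _ 0]) (simp add: unit_ball_def)

text \<open>The ball is symmetric, so \<open>G b\<close> is half the difference of two points of the set.\<close>
lemma generator_le_set_norm:
  assumes Nn: "is_norm Nn" and b: "b \<in> unit_ball Np"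
  shows "Nn (G *v b) \<le> set_norm Nn {c + G *v b | b. b \<in> unit_ball Np}"
proof -
  interpret Nn: gen_norm Nn by (rule gen_norm.intro) (rule Nn)
  let ?\<Omega> = "{c + G *v b | b. b \<in> unit_ball Np}"
  have "c + G *v b \<in> ?\<Omega>" "c + G *v (- b) \<in> ?\<Omega>"
    using b Np.minus[of b] by (auto simp: unit_ball_def)
  then have "Nn (c + G *v b) + Nn (c + G *v (- b)) \<le> 2 * set_norm Nn ?\<Omega>"
    using set_norm_upper[OF Nn compact_affine_unit_ball] by (smt (verit))
  moreover have "G *v b = (1/2) *\<^sub>R ((c + G *v b) - (c + G *v (- b)))"
    by (simp add: matrix_vector_mult_scaleR[of G "-1", simplified] scaleR_2[symmetric])
  then have "Nn (G *v b) = (1/2) * Nn ((c + G *v b) - (c + G *v (- b)))"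
    by (metis Nn.scaleR abs_divide abs_one abs_numeral)
  ultimately show ?thesis using Nn.triangle_diff[of "c + G *v b" "c + G *v (- b)"] by simp
qed

end

context gen_norm_matrix
begin

lemma mexp_integral_mult_in_set_integral:
  assumes "\<omega> \<in> W"
  shows "integral {0..t} (\<lambda>s. mexp (s *\<^sub>R A)) *v \<omega> \<in> set_integral_mv (\<lambda>s. mexp (s *\<^sub>R A)) t W"
  unfolding set_integral_mv_def integral_mexp_mult_vector
  using assms by (auto intro!: exI[of _ "\<lambda>s. \<omega>"])

lemma set_integral_near_mean:
  assumes "0 < t" "closed W" "convex W" "\<And>x. x \<in> W \<Longrightarrow> N x \<le> R"
    and "y \<in> set_integral_mv (\<lambda>s. mexp (s *\<^sub>R A)) t W"
  obtains \<omega> where "\<omega> \<in> W"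
    "N (integral {0..t} (\<lambda>s. mexp (s *\<^sub>R A)) *v \<omega> - y) \<le> t\<^sup>2 * normA * exp (t * normA) * R"
proof -
  obtain w where w: "w measurable_on {0..t}" "\<And>s. s \<in> {0..t} \<Longrightarrow> w s \<in> W"
    and y: "y = integral {0..t} (\<lambda>s. mexp (s *\<^sub>R A) *v w s)"
    using assms(5) unfolding set_integral_mv_def by blast
  have wR: "\<And>s. s \<in> {0..t} \<Longrightarrow> N (w s) \<le> R" using w(2) assms(4) by blast
  note w_int = integrable_mexp_mult_bounded[OF w(1) wR]
  define \<omega> where "\<omega> = (1/t) *\<^sub>R integral {0..t} w"
  have \<omega>: "\<omega> \<in> W"
    unfolding \<omega>_def by (rule integral_mean_in_closed_convex[OF w_int(2) assms(1-3) w(2)])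
  define z where "z s = \<omega> - w s" for s
  have z_int: "z integrable_on {0..t}"
    unfolding z_def by (rule integrable_diff[OF integrable_const_ivl w_int(2)])
  have Ez_int: "(\<lambda>s. mexp (s *\<^sub>R A) *v z s) integrable_on {0..t}"
    unfolding z_def matrix_vector_mult_diff_distrib
    by (rule integrable_diff[OF integrable_mexp_mult_vector w_int(1)])
  have z_zero: "integral {0..t} z = 0"
    unfolding z_def using integral_diff[OF integrable_const_ivl w_int(2)] assms(1)
    by (simp add: \<omega>_def)
  have "integral {0..t} (\<lambda>s. mexp (s *\<^sub>R A)) *v \<omega> - y
      = integral {0..t} (\<lambda>s. mexp (s *\<^sub>R A) *v z s)"
    unfolding y integral_mexp_mult_vector z_def matrix_vector_mult_diff_distrib
    by (rule integral_diff[OF integrable_mexp_mult_vector w_int(1), symmetric])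
  also have "\<dots> = integral {0..t} (\<lambda>s. mexp (s *\<^sub>R A) *v z s - z s)"
    using integral_diff[OF Ez_int z_int] z_zero by simp
  also have "N \<dots> \<le> integral {0..t} (\<lambda>s. (2 * R * normA * exp (t * normA)) * s)"
  proof (rule integral_le[OF integrable_diff[OF Ez_int z_int] _ assms(1)])
    show "(\<lambda>s. (2 * R * normA * exp (t * normA)) * s) integrable_on {0..t}"
      by (intro integrable_continuous_real continuous_intros)
    fix s
    assume s: "s \<in> {0..t}"
    have "N (z s) \<le> 2 * R"
      unfolding z_def using triangle_diff[of \<omega> "w s"] assms(4)[OF \<omega>] wR[OF s] by simp
    then have "s * normA * exp (t * normA) * N (z s) \<le> s * normA * exp (t * normA) * (2 * R)"
      using s normA_nonneg by (intro mult_left_mono) auto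
    with mexp_minus_id_le_linear[of s t "z s"] s
    show "N (mexp (s *\<^sub>R A) *v z s - z s) \<le> (2 * R * normA * exp (t * normA)) * s"
      by (simp add: algebra_simps)
  qed
  also have "\<dots> = t\<^sup>2 * normA * exp (t * normA) * R"
    using assms(1) by (simp add: power2_eq_square)
  finally show ?thesis using that \<omega> by blast
qed

lemma Tm_minus_mexp_integral_le:
  assumes "0 < t" "1 \<le> k"
  shows "N (Tm A t k *v v - integral {0..t} (\<lambda>s. mexp (s *\<^sub>R A)) *v v)
    \<le> t\<^sup>2 * normA * exp (t * normA) * N v"
proof -
  have "0 \<le> t * normA" using assms(1) normA_nonneg by simp
  then have "theta (t * normA) k \<le> t * normA * exp (t * normA)"
    using theta_le_exp_minus_one[OF _ assms(2)] exp_minus_one_le by fastforce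
  then have "t * theta (t * normA) k * N v \<le> t\<^sup>2 * normA * exp (t * normA) * N v"
    using assms(1) nonneg by (simp add: power2_eq_square mult_left_mono mult_right_mono)
  with integral_mexp_minus_Tm_le[OF assms(1), of v k] show ?thesis
    by (simp add: minus_commute[of "Tm A t k *v v"])
qed

lemma Tm_scaled_near_mexp_integral:
  assumes "0 < t" "1 \<le> k" "\<mu> \<le> 1"
  shows "N (Tm A t k *v (c + \<mu> *\<^sub>R g) - integral {0..t} (\<lambda>s. mexp (s *\<^sub>R A)) *v (c + g))
    \<le> (1 - \<mu>) * t * exp (t * normA) * N g + t\<^sup>2 * normA * exp (t * normA) * N (c + g)"
proof -
  let ?M = "integral {0..t} (\<lambda>s. mexp (s *\<^sub>R A))"
  have "Tm A t k *v (c + \<mu> *\<^sub>R g) - ?M *v (c + g)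
      = Tm A t k *v ((\<mu> - 1) *\<^sub>R g) + (Tm A t k *v (c + g) - ?M *v (c + g))"
    by (simp add: matrix_vector_right_distrib matrix_vector_mult_scaleR algebra_simps)
  also have "N \<dots> \<le> t * exp (t * normA) * N ((\<mu> - 1) *\<^sub>R g)
      + t\<^sup>2 * normA * exp (t * normA) * N (c + g)"
    by (rule order_trans[OF triangle add_mono[OF Tm_le[OF less_imp_le[OF assms(1)]]
          Tm_minus_mexp_integral_le[OF assms(1,2)]]])
  also have "N ((\<mu> - 1) *\<^sub>R g) = (1 - \<mu>) * N g" using assms(3) by (simp add: scaleR)
  finally show ?thesis by (simp add: ac_simps)
qed

lemma Tm_image_near_mexp_integral:
  fixes Np :: "real^'p \<Rightarrow> real" and c :: "real^'n" and G :: "real^'p^'n"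
  assumes Np: "is_norm Np" and "0 < t" "1 \<le> k" "\<mu> \<le> 1" "b \<in> unit_ball Np"
  shows "N (Tm A t k *v (c + \<mu> *\<^sub>R (G *v b)) - integral {0..t} (\<lambda>s. mexp (s *\<^sub>R A)) *v (c + G *v b))
    \<le> ((1 - \<mu>) * t + t\<^sup>2 * normA) * exp (t * normA) * set_norm N {c + G *v b | b. b \<in> unit_ball Np}"
proof -
  let ?R = "set_norm N {c + G *v b | b. b \<in> unit_ball Np}"
  have "N (G *v b) \<le> ?R"
    by (rule generator_le_set_norm[OF Np is_norm assms(5)])
  moreover have "N (c + G *v b) \<le> ?R"
    using assms(5) by (intro set_norm_upper[OF is_norm compact_affine_unit_ball[OF Np]]) blast
  ultimately have "(1 - \<mu>) * t * exp (t * normA) * N (G *v b)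
      + t\<^sup>2 * normA * exp (t * normA) * N (c + G *v b)
      \<le> (1 - \<mu>) * t * exp (t * normA) * ?R + t\<^sup>2 * normA * exp (t * normA) * ?R"
    using assms(2,4) normA_nonneg by (intro add_mono mult_left_mono) auto
  with Tm_scaled_near_mexp_integral[OF assms(2-4), of c "G *v b"] show ?thesis
    by (simp add: algebra_simps)
qed

lemma hdist_Tm_image_le:
  fixes Np :: "real^'p \<Rightarrow> real" and c :: "real^'n" and G :: "real^'p^'n"
  defines "\<Omega> \<equiv> {c + G *v b | b. b \<in> unit_ball Np}"
  assumes Np: "is_norm Np" and "0 < t" "1 \<le> k" "\<mu> \<le> 1"
  shows "hdist N ((\<lambda>x. Tm A t k *v x) ` {c + \<mu> *\<^sub>R (G *v b) | b. b \<in> unit_ball Np})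
      (set_integral_mv (\<lambda>s. mexp (s *\<^sub>R A)) t \<Omega>)
    \<le> ((1 - \<mu>) * t + 2 * t\<^sup>2 * normA) * exp (t * normA) * set_norm N \<Omega>"
proof -
  let ?M = "integral {0..t} (\<lambda>s. mexp (s *\<^sub>R A))"
  let ?X = "(\<lambda>x. Tm A t k *v x) ` {c + \<mu> *\<^sub>R (G *v b) | b. b \<in> unit_ball Np}"
  let ?Y = "set_integral_mv (\<lambda>s. mexp (s *\<^sub>R A)) t \<Omega>"
  define R where "R = set_norm N \<Omega>"
  define d\<^sub>1 where "d\<^sub>1 = ((1 - \<mu>) * t + t\<^sup>2 * normA) * exp (t * normA) * R"
  define d\<^sub>2 where "d\<^sub>2 = t\<^sup>2 * normA * exp (t * normA) * R"
  have \<Omega>: "compact \<Omega>" "convex \<Omega>" "c \<in> \<Omega>"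
    unfolding \<Omega>_def using compact_affine_unit_ball convex_affine_unit_ball
      center_in_affine_unit_ball Np by blast+
  have R: "N x \<le> R" if "x \<in> \<Omega>" for x
    unfolding R_def by (rule set_norm_upper[OF is_norm \<Omega>(1) that])
  have "0 \<le> d\<^sub>2"
    unfolding d\<^sub>2_def using R[OF \<Omega>(3)] nonneg[of c] \<open>0 < t\<close> normA_nonneg by simp
  have near: "N (Tm A t k *v (c + \<mu> *\<^sub>R (G *v b)) - ?M *v (c + G *v b)) \<le> d\<^sub>1"
    if "b \<in> unit_ball Np" for b
    unfolding d\<^sub>1_def R_def \<Omega>_def by (rule Tm_image_near_mexp_integral[OF Np assms(3-5) that])
  have "hdist N ?X ?Y \<le> d\<^sub>1 + d\<^sub>2"
  proof (rule hdist_le[OF _ _ nonneg])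
    have "0 \<in> unit_ball Np"
      unfolding unit_ball_def by (simp add: gen_norm.zero[OF gen_norm.intro[OF Np]])
    then show "?X \<noteq> {}" by blast
    show "?Y \<noteq> {}"
      using mexp_integral_mult_in_set_integral[OF \<Omega>(3)] by blast
  next
    fix x
    assume "x \<in> ?X"
    then obtain b where b: "b \<in> unit_ball Np" and x: "x = Tm A t k *v (c + \<mu> *\<^sub>R (G *v b))"
      by blast
    have "c + G *v b \<in> \<Omega>" unfolding \<Omega>_def using b by blast
    with near[OF b] \<open>0 \<le> d\<^sub>2\<close> show "\<exists>y\<in>?Y. N (x - y) \<le> d\<^sub>1 + d\<^sub>2"
      unfolding x by (intro bexI[OF _ mexp_integral_mult_in_set_integral]) auto
  next
    fix y
    assume "y \<in> ?Y"
    with set_integral_near_mean[OF \<open>0 < t\<close> compact_imp_closed[OF \<Omega>(1)] \<Omega>(2) R]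
    obtain \<omega> where "\<omega> \<in> \<Omega>" and \<omega>: "N (?M *v \<omega> - y) \<le> d\<^sub>2"
      unfolding d\<^sub>2_def by blast
    then obtain b where b: "b \<in> unit_ball Np" and "\<omega> = c + G *v b"
      unfolding \<Omega>_def by blast
    then have "N (Tm A t k *v (c + \<mu> *\<^sub>R (G *v b)) - y) \<le> d\<^sub>1 + d\<^sub>2"
      using triangle[of "Tm A t k *v (c + \<mu> *\<^sub>R (G *v b)) - ?M *v \<omega>" "?M *v \<omega> - y"]
        near[OF b] \<omega> by simp
    with b show "\<exists>x\<in>?X. N (x - y) \<le> d\<^sub>1 + d\<^sub>2" by blast
  qed
  then show ?thesis unfolding d\<^sub>1_def d\<^sub>2_def R_def by (simp add: algebra_simps)
qed

end

section \<open>Choice of the truncation order\<close>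

lemma invertible_iff_trivial_kernel:
  fixes M :: "real^'n^'n"
  shows "invertible M \<longleftrightarrow> (\<forall>x. M *v x = 0 \<longrightarrow> x = 0)"
  by (simp add: invertible_left_inverse matrix_left_invertible_ker)

lemma not_invertible_zero: "\<not> invertible (0::real^'n^'n)"
  unfolding invertible_iff_trivial_kernel
  using axis_nth[of undefined 1] by (metis matrix_vector_mult_0 zero_index zero_neq_one)

lemma Iset_pos: "t \<in> Iset A \<Longrightarrow> 0 < t"
  using not_invertible_zero unfolding Iset_def by (cases "t = 0") auto

lemma Tm_zero [simp]: "Tm A t 0 = 0"
  by (simp add: Tm_def)

lemma (in gen_norm_matrix) eventually_invertible_Tm:
  assumes "0 < t" "invertible (integral {0..t} (\<lambda>s. mexp (s *\<^sub>R A)))"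
  shows "eventually (\<lambda>k. invertible (Tm A t k)) sequentially"
proof -
  let ?M = "integral {0..t} (\<lambda>s. mexp (s *\<^sub>R A))"
  obtain B where B: "B ** ?M = mat 1" using assms(2) invertible_left_inverse by blast
  define \<beta> where "\<beta> = ind_norm N N B"
  have \<beta>: "N v \<le> \<beta> * N (?M *v v)" for v
    using ind_norm_le[OF is_norm is_norm, of B "?M *v v"]
    unfolding \<beta>_def by (simp add: matrix_vector_mul_assoc B)
  have "(\<lambda>k. \<beta> * (t * theta (t * normA) k)) \<longlonglongrightarrow> \<beta> * (t * 0)"
    by (intro tendsto_intros theta_tendsto_zero)
  then have "eventually (\<lambda>k. \<beta> * (t * theta (t * normA) k) < 1) sequentially"
    by (intro order_tendstoD(2)) auto
  then show ?thesis
  proof (rule eventually_mono)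
    fix k
    assume small: "\<beta> * (t * theta (t * normA) k) < 1"
    have "v = 0" if "Tm A t k *v v = 0" for v
    proof -
      have "N (?M *v v) \<le> t * theta (t * normA) k * N v"
        using integral_mexp_minus_Tm_le[OF assms(1), of v k] that by simp
      then have "N v \<le> \<beta> * (t * theta (t * normA) k * N v)"
        using \<beta>[of v] ind_norm_nonneg[OF is_norm is_norm, of B] order_trans mult_left_mono
        unfolding \<beta>_def by blast
      then have "(1 - \<beta> * (t * theta (t * normA) k)) * N v \<le> 0"
        by (simp add: algebra_simps)
      then have "N v \<le> 0" using small by (simp add: mult_le_0_iff)
      then show "v = 0" using nonneg[of v] zero_iff by (simp add: order_antisym)
    qed
    then show "invertible (Tm A t k)" by (simp add: invertible_iff_trivial_kernel)
  qed
qed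

lemma lam_tendsto_one: "(\<lambda>k. lam Nn Np A t c G k) \<longlonglongrightarrow> 1"
proof -
  have "(\<lambda>k. lam Nn Np A t c G k) \<longlonglongrightarrow>
      (1 - exp (t * ind_norm Nn Nn A) * 0 * ind_norm Nn Np (mp_inverse G) * Nn c) /
      (1 + exp (t * ind_norm Nn Nn A) * 0 * ind_norm Nn Np (mp_inverse G) * ind_norm Np Nn G)"
    unfolding lam_def Let_def by (intro tendsto_intros theta_tendsto_zero) simp
  then show ?thesis by simp
qed

lemma lam_le_one:
  assumes "is_norm Nn" "is_norm Np" "0 \<le> t"
  shows "lam Nn Np A t c G k \<le> 1"
proof -
  let ?e = "exp (t * ind_norm Nn Nn A) * theta (t * ind_norm Nn Nn A) k"
  have "0 \<le> ?e"
    using assms theta_nonneg ind_norm_nonneg[OF assms(1,1)] by simp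
  then have "0 \<le> ?e * ind_norm Nn Np (mp_inverse G) * Nn c"
    "0 \<le> ?e * ind_norm Nn Np (mp_inverse G) * ind_norm Np Nn G"
    using ind_norm_nonneg[OF assms(1,2)] ind_norm_nonneg[OF assms(2,1)]
      gen_norm.nonneg[OF gen_norm.intro[OF assms(1)]] by simp_all
  then show ?thesis unfolding lam_def Let_def by (simp add: divide_le_eq_1)
qed

lemma eta_spec:
  assumes "is_norm Nn" "t \<in> Iset A" "\<epsilon> < 1"
  shows "\<epsilon> < lam Nn Np A t c G (eta Nn Np A t c G \<epsilon>) \<and> invertible (Tm A t (eta Nn Np A t c G \<epsilon>))"
proof -
  interpret gen_norm_matrix Nn A by unfold_locales (rule assms(1))
  have "eventually (\<lambda>k. \<epsilon> < lam Nn Np A t c G k) sequentially"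
    using lam_tendsto_one assms(3) by (rule order_tendstoD(1))
  moreover have "eventually (\<lambda>k. invertible (Tm A t k)) sequentially"
    using eventually_invertible_Tm[OF Iset_pos[OF assms(2)]] assms(2) unfolding Iset_def by blast
  ultimately have "eventually (\<lambda>k. \<epsilon> < lam Nn Np A t c G k \<and> invertible (Tm A t k)) sequentially"
    by (rule eventually_conj)
  then obtain k where "\<epsilon> < lam Nn Np A t c G k \<and> invertible (Tm A t k)"
    unfolding eventually_sequentially by blast
  then show ?thesis unfolding eta_def by (rule LeastI)
qed

theorem lemma13:
  fixes Nn :: "real^'n \<Rightarrow> real" and Np :: "real^'p \<Rightarrow> real"
    and A :: "real^'n^'n" and c :: "real^'n" and G :: "real^'p^'n"
    and T t \<epsilon> :: real
  assumes "is_norm Nn" and "is_norm Np"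
    and "rank G = CARD('n)"
    and "T > 0"
    and "0 \<le> \<epsilon>" and "\<epsilon> < 1"
    and "t \<in> Iset A" and "0 \<le> t" and "t \<le> T"
    and "t * ind_norm Nn Nn A \<le> 1"
  shows "hdist Nn (Iapprox Nn Np A t c G \<epsilon>)
           (set_integral_mv (\<lambda>s. mexp (s *\<^sub>R A)) t {c + G *v b | b. b \<in> unit_ball Np})
         \<le> 2 * ((1 - \<epsilon>) * t + t\<^sup>2 * ind_norm Nn Nn A) * exp (T * ind_norm Nn Nn A)
             * set_norm Nn {c + G *v b | b. b \<in> unit_ball Np}"
proof -
  interpret gen_norm_matrix Nn A by unfold_locales (rule assms(1))
  define k where "k = eta Nn Np A t c G \<epsilon>"
  define \<mu> where "\<mu> = lam Nn Np A t c G k"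
  have "0 < t" using Iset_pos[OF assms(7)] .
  have \<mu>: "\<epsilon> < \<mu>" "\<mu> \<le> 1" and "invertible (Tm A t k)"
    using eta_spec[OF assms(1,7,6)] lam_le_one[OF assms(1,2,8)] unfolding k_def \<mu>_def by auto
  then have "1 \<le> k" using not_invertible_zero by (cases k) auto
  have "(1 - \<mu>) * t + 2 * t\<^sup>2 * normA \<le> 2 * ((1 - \<epsilon>) * t + t\<^sup>2 * normA)"
    using \<mu>(1) assms(6) \<open>0 < t\<close> mult_right_mono[of "1 - \<mu>" "1 - \<epsilon>" t] by simp
  moreover have "exp (t * normA) \<le> exp (T * normA)"
    using assms(9) normA_nonneg by (simp add: mult_right_mono)
  moreover have "0 \<le> set_norm Nn {c + G *v b | b. b \<in> unit_ball Np}"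
    using set_norm_nonneg[OF assms(1) compact_affine_unit_ball[OF assms(2)]
        center_in_affine_unit_ball[OF assms(2)]] .
  ultimately have "((1 - \<mu>) * t + 2 * t\<^sup>2 * normA) * exp (t * normA)
        * set_norm Nn {c + G *v b | b. b \<in> unit_ball Np}
      \<le> 2 * ((1 - \<epsilon>) * t + t\<^sup>2 * normA) * exp (T * normA)
        * set_norm Nn {c + G *v b | b. b \<in> unit_ball Np}"
    using \<mu>(2) \<open>0 < t\<close> normA_nonneg by (intro mult_right_mono mult_mono) auto
  with hdist_Tm_image_le[OF assms(2) \<open>0 < t\<close> \<open>1 \<le> k\<close> \<mu>(2), where c = c and G = G]
  show ?thesis
    unfolding Iapprox_def Let_def k_def[symmetric] \<mu>_def[symmetric] by (rule order_trans)
qed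

end
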